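(* Let $\mathfrak a=((\lambda_j,\alpha_j))_{j\in\mathbb Z}$ be a sequence with $(\lambda_j)$ strictly increasing real, $\lambda_0\le0<\lambda_1$, each $\alpha_j$ a non-zero matrix in $M_r^+$, satisfying condition (A1), and let $\mu:=\mu^{\mathfrak a}$. Then the limit $$H_\mu(x)=\lim_{n\to\infty}\int_{(-\pi(n-\frac12),\,\pi(n+\frac12)]}e^{2i\lambda x}\,d(\mu-\mu_0)(\lambda)$$ exists in the topology of $L_2((-1,1),M_r)$, and $H_\mu(x)^*=H_\mu(-x)$ for a.e. $x\in(-1,1)$.
   Context: $M_r$ is the algebra of complex $r\times r$ matrices with operator norm, $I$ its identity, $M_r^+=\{A: A=A^*\ge0\}$. $\Delta_n:=(\pi n-\frac\pi2,\pi n+\frac\pi2]$. Condition (A1): $\sup_{n\in\mathbb Z}\sum_{\lambda_j\in\Delta_n}1<\infty$, $\sum_{n\in\mathbb Z}\sum_{\lambda_j\in\Delta_n}|\lambda_j-\pi n|^2<\infty$, $\sum_{n\in\mathbb Z}\|I-\sum_{\lambda_k\in\Delta_n}\alpha_k\|^2<\infty$. $\mu^{\mathfrak a}:=\sum_j\alpha_j\delta_{\lambda_j}$, $\mu_0:=\sum_{n\in\mathbb Z}I\delta_{\pi n}$, with $\delta_\lambda$ the Dirac measure at $\lambda$. *)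

theory Defs
  imports "HOL-Analysis.Analysis"
begin

definition opnorm :: "complex^'r^'r \<Rightarrow> real" where
  "opnorm A = onorm (\<lambda>v::complex^'r. A *v v)"

definition adj :: "complex^'r^'r \<Rightarrow> complex^'r^'r" where
  "adj A = (\<chi> i j. cnj (A $ j $ i))"

definition smat :: "complex \<Rightarrow> complex^'r^'r \<Rightarrow> complex^'r^'r" where
  "smat c A = (\<chi> i j. c * A $ i $ j)"

definition psd :: "complex^'r^'r \<Rightarrow> bool" where
  "psd A \<longleftrightarrow> adj A = A \<and>
     (\<forall>v::complex^'r. 0 \<le> Re (\<Sum>i\<in>UNIV. cnj (v $ i) * (A *v v) $ i))"

definition Delta :: "int \<Rightarrow> real set" where
  "Delta n = {pi * of_int n - pi/2 <.. pi * of_int n + pi/2}"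

definition idx_in :: "(int \<Rightarrow> real) \<Rightarrow> real set \<Rightarrow> int set" where
  "idx_in lam S = {j. lam j \<in> S}"

definition condA1 :: "(int \<Rightarrow> real) \<Rightarrow> (int \<Rightarrow> complex^'r^'r) \<Rightarrow> bool" where
  "condA1 lam alpha \<longleftrightarrow>
     (\<exists>B::nat. \<forall>n. finite (idx_in lam (Delta n)) \<and> card (idx_in lam (Delta n)) \<le> B) \<and>
     (\<lambda>n. \<Sum>j\<in>idx_in lam (Delta n). (lam j - pi * of_int n)^2) summable_on UNIV \<and>
     (\<lambda>n. (opnorm (mat 1 - (\<Sum>k\<in>idx_in lam (Delta n). alpha k)))^2) summable_on UNIV"

text \<open>Integral of e^{2i\<lambda>x} over (-\<pi>(n-1/2), \<pi>(n+1/2)] with respect to the discrete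
  matrix measure \<mu>^a - \<mu>_0, written out as the corresponding finite sums of point masses.\<close>
definition partialH :: "(int \<Rightarrow> real) \<Rightarrow> (int \<Rightarrow> complex^'r^'r) \<Rightarrow> nat \<Rightarrow> real \<Rightarrow> complex^'r^'r" where
  "partialH lam alpha n x =
     (let S = {- pi * (real n - 1/2) <.. pi * (real n + 1/2)} in
       (\<Sum>j\<in>idx_in lam S. smat (cis (2 * lam j * x)) (alpha j))
       - (\<Sum>k\<in>{k::int. pi * of_int k \<in> S}. smat (cis (2 * pi * of_int k * x)) (mat 1)))"

end

theory Submission
  imports Defs "HOL-Probability.Characteristic_Functions"
begin

text \<open>Group the atoms $\lambda_j$ into the clusters $\Delta_k$. Expanding $e^{2i\lambda_j x}$ to
  second order around $\pi k$, the contribution of $\Delta_k$ to the partial sum is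
  $e^{2\pi i k x}(\sum_j \alpha_j - I) + 2ix\,e^{2\pi i k x}\sum_j \alpha_j(\lambda_j - \pi k)$ plus a
  remainder of size $O(\sum_j |\lambda_j - \pi k|^2)$, where positivity bounds the entries of the
  $\alpha_j$ by $1 + \sup_k \|I - \sum_{\lambda_j\in\Delta_k}\alpha_j\|$. Orthogonality of the
  $e^{2\pi i k x}$ on $(-1,1)$ bounds the $L_2$ norm of a block of clusters by the tails of the
  series in (A1), so the partial sums are Cauchy in $L_2$. Their limit is taken as the pointwise
  limit of a fast subsequence; as $\alpha_j^* = \alpha_j$, every partial sum satisfies
  $H_n(x)^* = H_n(-x)$, and this passes to the limit.\<close>

section \<open>Limits in $L_2$\<close>

lemma convergent_if_summable_norm_diff:
  fixes f :: "nat \<Rightarrow> 'a::banach"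
  assumes "summable (\<lambda>k. norm (f (Suc k) - f k))"
  shows "convergent f"
proof -
  have "summable (\<lambda>k. f (Suc k) - f k)" by (rule summable_norm_cancel[OF assms])
  then have "(\<lambda>n. \<Sum>k<n. f (Suc k) - f k) \<longlonglongrightarrow> suminf (\<lambda>k. f (Suc k) - f k)"
    by (rule summable_LIMSEQ)
  then have "(\<lambda>n. (f n - f 0) + f 0) \<longlonglongrightarrow> suminf (\<lambda>k. f (Suc k) - f k) + f 0"
    by (intro tendsto_add tendsto_const) (simp add: sum_lessThan_telescope)
  then show ?thesis unfolding convergent_def by auto
qed

lemma strict_mono_subseq_le:
  fixes eps b :: "nat \<Rightarrow> real"
  assumes eps: "eps \<longlonglongrightarrow> 0" and b: "\<And>k. 0 < b k"
  shows "\<exists>s. strict_mono s \<and> (\<forall>k. eps (s k) \<le> b k)"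
proof -
  have "\<exists>N. \<forall>n\<ge>N. eps n \<le> b k" for k
    using LIMSEQ_D[OF eps b[of k]] by (fastforce dest: abs_less_iff[THEN iffD1])
  then obtain N where N: "\<And>k n. n \<ge> N k \<Longrightarrow> eps n \<le> b k" by metis
  define s where "s = rec_nat (N 0) (\<lambda>k r. max (Suc r) (N (Suc k)))"
  have s0: "s 0 = N 0" and sS: "\<And>k. s (Suc k) = max (Suc (s k)) (N (Suc k))"
    by (simp_all add: s_def)
  have "strict_mono s" by (rule strict_mono_Suc_iff[THEN iffD2]) (simp add: sS less_max_iff_disj)
  moreover have "s k \<ge> N k" for k by (cases k) (simp_all add: s0 sS)
  ultimately show ?thesis using N by blast
qed

text \<open>Unlike \<open>lim X\<close>, which is an unspecified value for divergent \<open>X\<close>, this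
  commutes with bounded linear involutions for every \<open>X\<close>.\<close>
definition cauchy_lim :: "(nat \<Rightarrow> 'a::{metric_space,zero}) \<Rightarrow> 'a" where
  "cauchy_lim X = (if Cauchy X then lim X else 0)"

lemma cauchy_lim_LIMSEQ:
  fixes X :: "nat \<Rightarrow> 'a::{complete_space,zero}"
  shows "Cauchy X \<Longrightarrow> X \<longlonglongrightarrow> cauchy_lim X"
  using Cauchy_convergent convergent_LIMSEQ_iff by (auto simp: cauchy_lim_def)

lemma borel_measurable_cauchy_lim[measurable (raw)]:
  fixes f :: "nat \<Rightarrow> 'a \<Rightarrow> 'b::{banach, second_countable_topology}"
  assumes [measurable]: "\<And>i. f i \<in> borel_measurable M"
  shows "(\<lambda>x. cauchy_lim (\<lambda>i. f i x)) \<in> borel_measurable M"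
  unfolding cauchy_lim_def by measurable

lemma cauchy_lim_involution:
  fixes T :: "'a::banach \<Rightarrow> 'a"
  assumes T: "bounded_linear T" and inv: "\<And>x. T (T x) = x"
  shows "cauchy_lim (\<lambda>i. T (X i)) = T (cauchy_lim X)"
proof -
  note Cauchy_T = bounded_linear.Cauchy[OF T]
  show ?thesis
  proof (cases "Cauchy X")
    case True
    then have "(\<lambda>i. T (X i)) \<longlonglongrightarrow> T (cauchy_lim X)"
      by (intro bounded_linear.tendsto[OF T] cauchy_lim_LIMSEQ)
    then show ?thesis using Cauchy_T[OF True] by (simp add: cauchy_lim_def limI)
  next
    case False
    then have "\<not> Cauchy (\<lambda>i. T (X i))" using Cauchy_T[of "\<lambda>i. T (X i)"] inv by auto
    then show ?thesis using False by (simp add: cauchy_lim_def linear_simps(3)[OF T])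
  qed
qed

lemma nn_integral_le_AM_GM:
  assumes [measurable]: "f \<in> borel_measurable M" and f_nonneg: "\<And>x. 0 \<le> f x"
    and [measurable]: "A \<in> sets M" and c: "0 < c"
    and sq: "(\<integral>\<^sup>+x\<in>A. ennreal ((f x)^2) \<partial>M) \<le> ennreal (c^2)"
  shows "(\<integral>\<^sup>+x\<in>A. ennreal (f x) \<partial>M) \<le> ennreal (c/2) * (emeasure M A + 1)"
proof -
  have pointwise: "ennreal (f x) * indicator A x \<le>
      ennreal (c/2) * indicator A x + ennreal (1/(2*c)) * (ennreal ((f x)^2) * indicator A x)" for x
  proof (cases "x \<in> A")
    case True
    have "2 * c * f x \<le> c^2 + (f x)^2"
      using zero_le_power2[of "f x - c"] by (simp add: power2_diff algebra_simps)
    then have "f x \<le> c/2 + (1/(2*c)) * (f x)^2"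
      using c by (simp add: field_simps power2_eq_square)
    then show ?thesis using True c f_nonneg
      by (simp add: ennreal_plus[symmetric] ennreal_mult[symmetric] del: ennreal_plus)
  qed simp
  have "(\<integral>\<^sup>+x\<in>A. ennreal (f x) \<partial>M) \<le>
      (\<integral>\<^sup>+x. ennreal (c/2) * indicator A x + ennreal (1/(2*c)) * (ennreal ((f x)^2) * indicator A x) \<partial>M)"
    by (rule nn_integral_mono) (rule pointwise)
  also have "\<dots> = ennreal (c/2) * emeasure M A + ennreal (1/(2*c)) * (\<integral>\<^sup>+x\<in>A. ennreal ((f x)^2) \<partial>M)"
    by (subst nn_integral_add) (auto simp: nn_integral_cmult)
  also have "\<dots> \<le> ennreal (c/2) * emeasure M A + ennreal (1/(2*c)) * ennreal (c^2)"
    using sq by (intro add_mono mult_left_mono) auto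
  also have "ennreal (1/(2*c)) * ennreal (c^2) = ennreal (c/2)"
    using c by (simp add: ennreal_mult[symmetric] power2_eq_square)
  finally show ?thesis by (simp add: distrib_left)
qed

lemma AE_Cauchy_if_L2_fast:
  fixes P :: "nat \<Rightarrow> 'a \<Rightarrow> 'b::{banach, second_countable_topology}"
  assumes [measurable]: "\<And>i. P i \<in> borel_measurable M"
    and [measurable]: "A \<in> sets M" and A_fin: "emeasure M A < \<infinity>"
    and fast: "\<And>k. (\<integral>\<^sup>+x\<in>A. ennreal ((norm (P (Suc k) x - P k x))^2) \<partial>M) \<le> ennreal ((1/4)^k)"
  shows "AE x in M. x \<in> A \<longrightarrow> Cauchy (\<lambda>i. P i x)"
proof -
  define d where "d k x = norm (P (Suc k) x - P k x)" for k x
  have [measurable]: "d k \<in> borel_measurable M" for k unfolding d_def by measurable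
  have d_int: "(\<integral>\<^sup>+x\<in>A. ennreal (d k x) \<partial>M) \<le> ennreal ((1/2)^k/2) * (emeasure M A + 1)" for k
  proof -
    have "((1/2::real)^k)^2 = (1/4)^k" by (simp add: power2_eq_square power_mult_distrib[symmetric])
    then show ?thesis
      using nn_integral_le_AM_GM[of "d k" M A "(1/2)^k"] fast[of k] by (simp add: d_def)
  qed
  have "(\<integral>\<^sup>+x. (\<Sum>k. ennreal (d k x) * indicator A x) \<partial>M) = (\<Sum>k. \<integral>\<^sup>+x\<in>A. ennreal (d k x) \<partial>M)"
    by (rule nn_integral_suminf) measurable
  also have "\<dots> \<le> (\<Sum>k. ennreal ((1/2)^k/2) * (emeasure M A + 1))"
    by (intro suminf_le d_int) auto
  also have "\<dots> = ennreal (\<Sum>k. (1/2)^k/2) * (emeasure M A + 1)"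
    by (simp add: suminf_ennreal2 summable_divide summable_geometric)
  also have "\<dots> < \<infinity>" using A_fin by (simp add: ennreal_mult_less_top)
  finally have "AE x in M. (\<Sum>k. ennreal (d k x) * indicator A x) \<noteq> \<infinity>"
    by (intro nn_integral_PInf_AE) auto
  then show ?thesis
  proof (rule AE_mp, intro AE_I2 impI)
    fix x assume "(\<Sum>k. ennreal (d k x) * indicator A x) \<noteq> \<infinity>" and "x \<in> A"
    then have "summable (\<lambda>k. d k x)" by (intro summable_suminf_not_top) (auto simp: d_def)
    then show "Cauchy (\<lambda>i. P i x)"
      unfolding d_def by (intro convergent_Cauchy convergent_if_summable_norm_diff)
  qed
qed

text \<open>Fatou's lemma along the subsequence.\<close>
lemma nn_integral_L2_dist_le_limit:
  fixes P :: "nat \<Rightarrow> 'a \<Rightarrow> 'b::{banach, second_countable_topology}"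
  assumes [measurable]: "\<And>i. P i \<in> borel_measurable M" and [measurable]: "A \<in> sets M"
    and s: "strict_mono s"
    and lim: "AE x in M. x \<in> A \<longrightarrow> (\<lambda>i. P (s i) x) \<longlonglongrightarrow> H x"
    and bnd: "\<And>m. n \<le> m \<Longrightarrow> (\<integral>\<^sup>+x\<in>A. ennreal ((norm (P m x - P n x))^2) \<partial>M) \<le> e"
  shows "(\<integral>\<^sup>+x\<in>A. ennreal ((norm (P n x - H x))^2) \<partial>M) \<le> e"
proof -
  define g where "g k x = ennreal ((norm (P (s k) x - P n x))^2) * indicator A x" for k x
  have [measurable]: "g k \<in> borel_measurable M" for k unfolding g_def by measurable
  have "AE x in M. ennreal ((norm (P n x - H x))^2) * indicator A x = liminf (\<lambda>k. g k x)"
    using lim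
  proof (rule AE_mp, intro AE_I2 impI)
    fix x assume lim_x: "x \<in> A \<longrightarrow> (\<lambda>i. P (s i) x) \<longlonglongrightarrow> H x"
    show "ennreal ((norm (P n x - H x))^2) * indicator A x = liminf (\<lambda>k. g k x)"
    proof (cases "x \<in> A")
      case True
      then have "(\<lambda>k. ennreal ((norm (P (s k) x - P n x))^2)) \<longlonglongrightarrow> ennreal ((norm (H x - P n x))^2)"
        using lim_x by (intro tendsto_ennrealI tendsto_intros) auto
      then have "(\<lambda>k. g k x) \<longlonglongrightarrow> ennreal ((norm (P n x - H x))^2) * indicator A x"
        using True by (simp add: g_def norm_minus_commute)
      then show ?thesis by (simp add: lim_imp_Liminf)
    qed (simp add: g_def Liminf_const)
  qed
  then have "(\<integral>\<^sup>+x\<in>A. ennreal ((norm (P n x - H x))^2) \<partial>M) = (\<integral>\<^sup>+x. liminf (\<lambda>k. g k x) \<partial>M)"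
    by (rule nn_integral_cong_AE)
  also have "\<dots> \<le> liminf (\<lambda>k. integral\<^sup>N M (g k))"
    by (rule nn_integral_liminf) simp
  also have "\<dots> \<le> limsup (\<lambda>k. integral\<^sup>N M (g k))"
    by (rule Liminf_le_Limsup) simp
  also have "\<dots> \<le> e"
  proof (rule Limsup_bounded, rule eventually_sequentiallyI)
    fix k assume "n \<le> k"
    then have "n \<le> s k" using seq_suble[OF s, of k] by linarith
    then show "integral\<^sup>N M (g k) \<le> e" unfolding g_def by (rule bnd)
  qed
  finally show ?thesis .
qed

lemma nn_integral_power2_norm_finite_if_close:
  fixes F G :: "'a \<Rightarrow> 'b::{real_normed_vector, second_countable_topology}"
  assumes [measurable]: "F \<in> borel_measurable M" "G \<in> borel_measurable M" and [measurable]: "A \<in> sets M"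
    and F_fin: "(\<integral>\<^sup>+x\<in>A. ennreal ((norm (F x))^2) \<partial>M) < \<infinity>"
    and dist_fin: "(\<integral>\<^sup>+x\<in>A. ennreal ((norm (F x - G x))^2) \<partial>M) < \<infinity>"
  shows "(\<integral>\<^sup>+x\<in>A. ennreal ((norm (G x))^2) \<partial>M) < \<infinity>"
proof -
  have pointwise: "ennreal ((norm (G x))^2) \<le>
      2 * ennreal ((norm (F x))^2) + 2 * ennreal ((norm (F x - G x))^2)" for x
  proof -
    have "norm (G x) \<le> norm (F x) + norm (F x - G x)"
      using norm_triangle_ineq4[of "F x" "F x - G x"] by simp
    then have "(norm (G x))^2 \<le> (norm (F x) + norm (F x - G x))^2" by (simp add: power_mono)
    also have "\<dots> \<le> 2 * (norm (F x))^2 + 2 * (norm (F x - G x))^2"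
      using zero_le_power2[of "norm (F x) - norm (F x - G x)"] by (simp add: power2_diff power2_sum)
    finally have "ennreal ((norm (G x))^2) \<le> ennreal (2 * (norm (F x))^2 + 2 * (norm (F x - G x))^2)"
      by (rule ennreal_leI)
    then show ?thesis by (simp add: ennreal_mult)
  qed
  have "(\<integral>\<^sup>+x\<in>A. ennreal ((norm (G x))^2) \<partial>M) \<le>
      (\<integral>\<^sup>+x. 2 * (ennreal ((norm (F x))^2) * indicator A x)
         + 2 * (ennreal ((norm (F x - G x))^2) * indicator A x) \<partial>M)"
    using pointwise by (intro nn_integral_mono) (auto simp: indicator_def)
  also have "\<dots> = 2 * (\<integral>\<^sup>+x\<in>A. ennreal ((norm (F x))^2) \<partial>M)
      + 2 * (\<integral>\<^sup>+x\<in>A. ennreal ((norm (F x - G x))^2) \<partial>M)"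
    by (subst nn_integral_add) (auto simp: nn_integral_cmult)
  also have "\<dots> < \<infinity>" using F_fin dist_fin by (simp add: ennreal_mult_less_top)
  finally show ?thesis .
qed

text \<open>Riesz--Fischer, with the limit given explicitly so that symmetries of the \<open>P n\<close> pass to it.\<close>
lemma L2_limit_cauchy_lim:
  fixes P :: "nat \<Rightarrow> 'a \<Rightarrow> 'b::{banach, second_countable_topology}"
  assumes [measurable]: "\<And>i. P i \<in> borel_measurable M"
    and A[measurable]: "A \<in> sets M" and A_fin: "emeasure M A < \<infinity>"
    and P0: "(\<integral>\<^sup>+x\<in>A. ennreal ((norm (P 0 x))^2) \<partial>M) < \<infinity>"
    and bnd: "\<And>n m. n \<le> m \<Longrightarrow> (\<integral>\<^sup>+x\<in>A. ennreal ((norm (P m x - P n x))^2) \<partial>M) \<le> ennreal (eps n)"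
    and eps: "eps \<longlonglongrightarrow> 0"
  obtains s where "strict_mono s"
    and "(\<integral>\<^sup>+x\<in>A. ennreal ((norm (cauchy_lim (\<lambda>i. P (s i) x)))^2) \<partial>M) < \<infinity>"
    and "(\<lambda>n. \<integral>\<^sup>+x\<in>A. ennreal ((norm (P n x - cauchy_lim (\<lambda>i. P (s i) x)))^2) \<partial>M) \<longlonglongrightarrow> 0"
proof -
  obtain s where s: "strict_mono s" and fast: "\<And>k. eps (s k) \<le> (1/4)^k"
    using strict_mono_subseq_le[OF eps, of "\<lambda>k. (1/4)^k"] by auto
  define H where "H x = cauchy_lim (\<lambda>i. P (s i) x)" for x
  have "AE x in M. x \<in> A \<longrightarrow> Cauchy (\<lambda>i. P (s i) x)"
  proof (rule AE_Cauchy_if_L2_fast[OF _ A A_fin])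
    fix k
    have "s k \<le> s (Suc k)" using s by (simp add: strict_mono_less_eq)
    then show "(\<integral>\<^sup>+x\<in>A. ennreal ((norm (P (s (Suc k)) x - P (s k) x))^2) \<partial>M) \<le> ennreal ((1/4)^k)"
      using bnd fast[of k] ennreal_leI order_trans by blast
  qed simp
  then have lim: "AE x in M. x \<in> A \<longrightarrow> (\<lambda>i. P (s i) x) \<longlonglongrightarrow> H x"
    by eventually_elim (simp add: H_def cauchy_lim_LIMSEQ)
  have dist: "(\<integral>\<^sup>+x\<in>A. ennreal ((norm (P n x - H x))^2) \<partial>M) \<le> ennreal (eps n)" for n
    by (rule nn_integral_L2_dist_le_limit[OF _ A s lim bnd]) simp_all
  have "(\<lambda>n. \<integral>\<^sup>+x\<in>A. ennreal ((norm (P n x - H x))^2) \<partial>M) \<longlonglongrightarrow> 0"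
  proof (rule tendsto_sandwich[OF _ _ tendsto_const])
    show "(\<lambda>n. ennreal (eps n)) \<longlonglongrightarrow> 0" using eps by (metis ennreal_0 tendsto_ennrealI)
  qed (use dist in auto)
  moreover have "(\<integral>\<^sup>+x\<in>A. ennreal ((norm (H x))^2) \<partial>M) < \<infinity>"
  proof (rule nn_integral_power2_norm_finite_if_close[OF _ _ A P0])
    show "(\<integral>\<^sup>+x\<in>A. ennreal ((norm (P 0 x - H x))^2) \<partial>M) < \<infinity>"
      using dist[of 0] by (metis ennreal_less_top infinity_ennreal_def order_le_less_trans)
  qed (simp_all add: H_def)
  ultimately show ?thesis using that s unfolding H_def by blast
qed

section \<open>Trigonometric sums\<close>

lemma has_integral_cis_2pi_int:
  fixes m :: int
  shows "((\<lambda>x. cis (2 * pi * of_int m * x)) has_integral (if m = 0 then 2 else 0)) {-1..1}"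
proof (cases "m = 0")
  case True
  then show ?thesis using has_integral_const_real[of "1::complex" "-1" 1] by (simp add: scaleR_conv_of_real)
next
  case False
  define c where "c = 2 * pi * of_int m"
  have c0: "c \<noteq> 0" using False by (simp add: c_def)
  have deriv: "((\<lambda>x. cis (c*x) / (\<i> * of_real c)) has_vector_derivative cis (c*x)) (at x within {-1..1})" for x
  proof -
    have "((\<lambda>x. cis (c*x)) has_derivative (\<lambda>t. (c*t) *\<^sub>R (\<i> * cis (c*x)))) (at x within {-1..1})"
      by (intro has_derivative_cis derivative_intros)
    then have "((\<lambda>x. cis (c*x) / (\<i> * of_real c)) has_derivative
        (\<lambda>t. ((c*t) *\<^sub>R (\<i> * cis (c*x))) / (\<i> * of_real c))) (at x within {-1..1})"
      by (rule bounded_linear.has_derivative[OF bounded_linear_divide])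
    moreover have "(\<lambda>t. ((c*t) *\<^sub>R (\<i> * cis (c*x))) / (\<i> * of_real c)) = (\<lambda>t. t *\<^sub>R cis (c*x))"
      using c0 by (auto simp: scaleR_conv_of_real field_simps)
    ultimately show ?thesis by (simp add: has_vector_derivative_def)
  qed
  have "((\<lambda>x. cis (c*x)) has_integral (cis (c*1) / (\<i> * of_real c) - cis (c*(-1)) / (\<i> * of_real c))) {-1..1}"
    by (rule fundamental_theorem_of_calculus) (auto intro: deriv)
  moreover have "cis (c*1) = 1" "cis (c*(-1)) = 1" unfolding c_def
    by (simp_all add: cis.ctr cos_int_2pin sin_int_2pin complex_eq_iff)
  ultimately show ?thesis using False by (simp add: c_def mult.assoc)
qed

lemma has_integral_norm_sq_trig_poly:
  fixes c :: "int \<Rightarrow> complex" and K :: "int set"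
  assumes K: "finite K"
  shows "((\<lambda>x. (cmod (\<Sum>k\<in>K. c k * cis (2 * pi * of_int k * x)))^2) has_integral
           (2 * (\<Sum>k\<in>K. (cmod (c k))^2))) {-1..1}"
proof -
  define g where "g x = (\<Sum>k\<in>K. \<Sum>k'\<in>K. (c k * cnj (c k')) * cis (2 * pi * of_int (k - k') * x))" for x
  have expand: "(cmod (\<Sum>k\<in>K. c k * cis (2 * pi * of_int k * x)))^2 = Re (g x)" for x
  proof -
    have cis_diff: "cis (2 * pi * of_int k * x) * cnj (cis (2 * pi * of_int k' * x))
        = cis (2 * pi * of_int (k - k') * x)" for k k' :: int
      by (simp add: cis_cnj cis_mult algebra_simps)
    have product_term: "(c k * cis (2 * pi * of_int k * x)) * cnj (c k' * cis (2 * pi * of_int k' * x))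
        = (c k * cnj (c k')) * cis (2 * pi * of_int (k - k') * x)" for k k' :: int
      using cis_diff[of k k'] by (simp add: algebra_simps)
    have "complex_of_real ((cmod (\<Sum>k\<in>K. c k * cis (2 * pi * of_int k * x)))^2)
       = (\<Sum>k\<in>K. c k * cis (2 * pi * of_int k * x)) * cnj (\<Sum>k\<in>K. c k * cis (2 * pi * of_int k * x))"
      by (rule complex_norm_square)
    also have "\<dots> = (\<Sum>k\<in>K. \<Sum>k'\<in>K. (c k * cis (2 * pi * of_int k * x)) * cnj (c k' * cis (2 * pi * of_int k' * x)))"
      by (simp add: cnj_sum sum_product)
    also have "\<dots> = g x"
      unfolding g_def product_term ..
    finally show ?thesis by (metis Re_complex_of_real)
  qed
  have diag: "(\<Sum>k'\<in>K. (c k * cnj (c k')) * (if k - k' = 0 then 2 else 0)) = 2 * (c k * cnj (c k))"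
    if "k \<in> K" for k
  proof -
    have "(\<Sum>k'\<in>K. (c k * cnj (c k')) * (if k - k' = 0 then 2 else 0))
        = (\<Sum>k'\<in>K. if k = k' then 2 * (c k * cnj (c k')) else 0)"
      by (intro sum.cong refl) auto
    then show ?thesis using K that by simp
  qed
  have "(g has_integral (\<Sum>k\<in>K. \<Sum>k'\<in>K. (c k * cnj (c k')) * (if k - k' = 0 then 2 else 0))) {-1..1}"
    unfolding g_def by (intro has_integral_sum K has_integral_mult_right has_integral_cis_2pi_int)
  then have "(g has_integral (\<Sum>k\<in>K. 2 * (c k * cnj (c k)))) {-1..1}"
    by (simp only: sum.cong[OF refl diag])
  from has_integral_linear[OF this bounded_linear_Re]
  have "((\<lambda>x. Re (g x)) has_integral Re (\<Sum>k\<in>K. 2 * (c k * cnj (c k)))) {-1..1}" by (simp add: o_def)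
  moreover have "Re (\<Sum>k\<in>K. 2 * (c k * cnj (c k))) = 2 * (\<Sum>k\<in>K. (cmod (c k))^2)"
    by (simp add: Re_sum sum_distrib_left complex_mult_cnj cmod_def)
  ultimately show ?thesis using expand by simp
qed

lemma norm_cis_sub_one_sub_linear_le: "cmod (cis t - 1 - \<i> * of_real t) \<le> t^2 / 2"
proof -
  have "cmod (iexp t - (\<Sum>k \<le> 1. (\<i> * of_real t)^k / fact k)) \<le> \<bar>t\<bar>^(Suc 1) / fact (Suc 1)"
    by (rule iexp_approx1)
  then show ?thesis by (simp add: cis_conv_exp diff_diff_add power2_eq_square)
qed

lemma power2_norm_add3_le:
  fixes u v w :: "'a::real_normed_vector"
  shows "(norm (u + v + w))^2 \<le> 3 * ((norm u)^2 + (norm v)^2 + (norm w)^2)"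
proof -
  have "norm (u + v + w) \<le> norm u + norm v + norm w"
    by (metis norm_triangle_ineq add_right_mono order_trans)
  then have "(norm (u + v + w))^2 \<le> (norm u + norm v + norm w)^2" by (simp add: power_mono)
  also have "\<dots> \<le> 3 * ((norm u)^2 + (norm v)^2 + (norm w)^2)"
    using sum_squares_bound[of "norm u" "norm v"] sum_squares_bound[of "norm u" "norm w"]
      sum_squares_bound[of "norm v" "norm w"]
    by (simp add: power2_eq_square algebra_simps)
  finally show ?thesis .
qed

lemma power2_norm_taylor_le:
  assumes "\<bar>x\<bar> \<le> 1"
  shows "(cmod (U + (2 * \<i> * of_real x) * V + W))^2 \<le> 3 * (cmod U)^2 + 12 * (cmod V)^2 + 3 * (cmod W)^2"
proof -
  have "(cmod ((2 * \<i> * of_real x) * V))^2 = 4 * x^2 * (cmod V)^2"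
    by (simp add: norm_mult power_mult_distrib)
  also have "\<dots> \<le> 4 * 1 * (cmod V)^2"
    using assms by (intro mult_right_mono mult_left_mono) (auto simp: abs_square_le_1)
  finally have "(cmod ((2 * \<i> * of_real x) * V))^2 \<le> 4 * (cmod V)^2" by simp
  then show ?thesis using power2_norm_add3_le[of U "(2 * \<i> * of_real x) * V" W] by simp
qed

definition sq_dev :: "(int \<Rightarrow> real) \<Rightarrow> int set \<Rightarrow> int \<Rightarrow> real" where
  "sq_dev lam J k = (\<Sum>j\<in>J. (lam j - pi * of_int k)^2)"

lemma sq_dev_nonneg: "0 \<le> sq_dev lam J k"
  unfolding sq_dev_def by (intro sum_nonneg) simp

lemma cluster_taylor_expansion:
  "(\<Sum>j\<in>J. cis (2 * lam j * x) * a j) - cis (2 * pi * of_int k * x) * d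
   = cis (2 * pi * of_int k * x) * ((\<Sum>j\<in>J. a j) - d)
     + (2 * \<i> * of_real x) * (cis (2 * pi * of_int k * x) * (\<Sum>j\<in>J. a j * of_real (lam j - pi * of_int k)))
     + cis (2 * pi * of_int k * x) *
         (\<Sum>j\<in>J. a j * (cis (2 * (lam j - pi * of_int k) * x) - 1 - \<i> * of_real (2 * (lam j - pi * of_int k) * x)))"
proof -
  define e where "e = cis (2 * pi * of_int k * x)"
  define \<delta> where "\<delta> j = lam j - pi * of_int k" for j
  have "cis (2 * lam j * x) = e * cis (2 * \<delta> j * x)" for j
    unfolding e_def \<delta>_def by (simp add: cis_mult algebra_simps)
  then have shift: "(\<Sum>j\<in>J. cis (2 * lam j * x) * a j) = e * (\<Sum>j\<in>J. a j * cis (2 * \<delta> j * x))"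
    by (simp add: sum_distrib_left mult_ac)
  have remainder: "(\<Sum>j\<in>J. a j * (cis (2 * \<delta> j * x) - 1 - \<i> * of_real (2 * \<delta> j * x)))
      = (\<Sum>j\<in>J. a j * cis (2 * \<delta> j * x)) - (\<Sum>j\<in>J. a j) - (2 * \<i> * of_real x) * (\<Sum>j\<in>J. a j * of_real (\<delta> j))"
    by (simp add: sum_subtractf sum.distrib sum_distrib_left algebra_simps)
  show ?thesis
    unfolding e_def[symmetric] \<delta>_def[symmetric] shift remainder by (simp add: algebra_simps)
qed

lemma norm_cluster_remainder_le:
  assumes x: "\<bar>x\<bar> \<le> 1" and a: "\<And>j. j \<in> J \<Longrightarrow> cmod (a j) \<le> A"
  shows "cmod (\<Sum>j\<in>J. a j * (cis (2 * (lam j - pi * of_int k) * x) - 1 - \<i> * of_real (2 * (lam j - pi * of_int k) * x)))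
    \<le> 2 * A * sq_dev lam J k"
proof -
  have rem: "cmod (cis (2 * t * x) - 1 - \<i> * of_real (2 * t * x)) \<le> 2 * t^2" for t
  proof -
    have "cmod (cis (2 * t * x) - 1 - \<i> * of_real (2 * t * x)) \<le> (2 * t * x)^2 / 2"
      by (rule norm_cis_sub_one_sub_linear_le)
    also have "\<dots> = 2 * t^2 * x^2" by (simp add: power2_eq_square)
    also have "\<dots> \<le> 2 * t^2" using x by (simp add: abs_square_le_1 mult_left_le)
    finally show ?thesis .
  qed
  have "cmod (\<Sum>j\<in>J. a j * (cis (2 * (lam j - pi * of_int k) * x) - 1 - \<i> * of_real (2 * (lam j - pi * of_int k) * x)))
      \<le> (\<Sum>j\<in>J. A * (2 * (lam j - pi * of_int k)^2))"
    by (rule order_trans[OF norm_sum sum_mono]) (auto simp only: norm_mult intro!: mult_mono' a rem norm_ge_zero)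
  also have "\<dots> = 2 * A * sq_dev lam J k" by (simp add: sq_dev_def sum_distrib_left mult_ac)
  finally show ?thesis .
qed

lemma norm_first_moment_sq_le:
  assumes a: "\<And>j. j \<in> J \<Longrightarrow> cmod (a j) \<le> A" and card: "card J \<le> B"
  shows "(cmod (\<Sum>j\<in>J. a j * of_real (lam j - pi * of_int k)))^2 \<le> A^2 * B * sq_dev lam J k"
proof -
  have "cmod (\<Sum>j\<in>J. a j * of_real (lam j - pi * of_int k)) \<le> (\<Sum>j\<in>J. A * \<bar>lam j - pi * of_int k\<bar>)"
    by (rule order_trans[OF norm_sum sum_mono])
      (auto simp only: norm_mult norm_of_real intro!: mult_right_mono a)
  also have "\<dots> = A * (\<Sum>j\<in>J. \<bar>lam j - pi * of_int k\<bar>)" by (simp add: sum_distrib_left)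
  finally have "(cmod (\<Sum>j\<in>J. a j * of_real (lam j - pi * of_int k)))^2
      \<le> A^2 * (\<Sum>j\<in>J. \<bar>lam j - pi * of_int k\<bar>)^2"
    by (simp add: power_mono power_mult_distrib[symmetric])
  also have "\<dots> \<le> A^2 * (card J * sq_dev lam J k)"
    using sum_squared_le_sum_of_squares[of "\<lambda>j. \<bar>lam j - pi * of_int k\<bar>" J]
    by (intro mult_left_mono) (simp_all add: sq_dev_def mult.commute)
  also have "\<dots> \<le> A^2 * (B * sq_dev lam J k)"
    using card by (intro mult_left_mono mult_right_mono) (simp_all add: sq_dev_nonneg)
  finally show ?thesis by (simp add: mult.assoc)
qed

lemma power2_norm_cluster_sum_le:
  fixes lam :: "int \<Rightarrow> real" and a :: "int \<Rightarrow> complex" and J :: "int \<Rightarrow> int set"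
  assumes x: "\<bar>x\<bar> \<le> 1" and a: "\<And>k j. k \<in> K \<Longrightarrow> j \<in> J k \<Longrightarrow> cmod (a j) \<le> A"
  shows "(cmod (\<Sum>k\<in>K. (\<Sum>j\<in>J k. cis (2 * lam j * x) * a j) - cis (2 * pi * of_int k * x) * d))^2
    \<le> 3 * (cmod (\<Sum>k\<in>K. ((\<Sum>j\<in>J k. a j) - d) * cis (2 * pi * of_int k * x)))^2
      + 12 * (cmod (\<Sum>k\<in>K. (\<Sum>j\<in>J k. a j * of_real (lam j - pi * of_int k)) * cis (2 * pi * of_int k * x)))^2
      + 12 * A^2 * (\<Sum>k\<in>K. sq_dev lam (J k) k)^2"
proof -
  define e where "e k = cis (2 * pi * of_int k * x)" for k :: int
  define \<rho> where "\<rho> k = (\<Sum>j\<in>J k. a j * (cis (2 * (lam j - pi * of_int k) * x) - 1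
      - \<i> * of_real (2 * (lam j - pi * of_int k) * x)))" for k
  define W where "W = (\<Sum>k\<in>K. e k * \<rho> k)"
  have "cmod W \<le> (\<Sum>k\<in>K. 2 * A * sq_dev lam (J k) k)"
    unfolding W_def \<rho>_def e_def using x a
    by (intro order_trans[OF norm_sum sum_mono])
      (auto simp only: norm_mult norm_cis mult_1_left intro!: norm_cluster_remainder_le)
  then have "(cmod W)^2 \<le> (2 * A * (\<Sum>k\<in>K. sq_dev lam (J k) k))^2"
    by (intro power_mono) (simp_all add: sum_distrib_left)
  then have W_sq: "3 * (cmod W)^2 \<le> 12 * A^2 * (\<Sum>k\<in>K. sq_dev lam (J k) k)^2"
    by (simp add: power_mult_distrib)
  have "(\<Sum>k\<in>K. (\<Sum>j\<in>J k. cis (2 * lam j * x) * a j) - cis (2 * pi * of_int k * x) * d)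
      = (\<Sum>k\<in>K. ((\<Sum>j\<in>J k. a j) - d) * cis (2 * pi * of_int k * x))
        + (2 * \<i> * of_real x) * (\<Sum>k\<in>K. (\<Sum>j\<in>J k. a j * of_real (lam j - pi * of_int k)) * cis (2 * pi * of_int k * x))
        + W"
    unfolding W_def \<rho>_def e_def cluster_taylor_expansion
    by (simp add: sum.distrib sum_distrib_left mult_ac)
  then have "(cmod (\<Sum>k\<in>K. (\<Sum>j\<in>J k. cis (2 * lam j * x) * a j) - cis (2 * pi * of_int k * x) * d))^2
    \<le> 3 * (cmod (\<Sum>k\<in>K. ((\<Sum>j\<in>J k. a j) - d) * cis (2 * pi * of_int k * x)))^2
      + 12 * (cmod (\<Sum>k\<in>K. (\<Sum>j\<in>J k. a j * of_real (lam j - pi * of_int k)) * cis (2 * pi * of_int k * x)))^2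
      + 3 * (cmod W)^2"
    by (simp only: power2_norm_taylor_le[OF x])
  then show ?thesis using add_left_mono[OF W_sq] by (rule order_trans)
qed

lemma integral_norm_sq_cluster_sum_le:
  fixes lam :: "int \<Rightarrow> real" and a :: "int \<Rightarrow> complex" and J :: "int \<Rightarrow> int set"
  assumes K: "finite K"
    and card: "\<And>k. k \<in> K \<Longrightarrow> card (J k) \<le> B"
    and a: "\<And>k j. k \<in> K \<Longrightarrow> j \<in> J k \<Longrightarrow> cmod (a j) \<le> A"
    and defect: "\<And>k. k \<in> K \<Longrightarrow> cmod ((\<Sum>j\<in>J k. a j) - d) \<le> D k"
  shows "integral {-1..1} (\<lambda>x. (cmod (\<Sum>k\<in>K. (\<Sum>j\<in>J k. cis (2 * lam j * x) * a j) - cis (2 * pi * of_int k * x) * d))^2)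
     \<le> 6 * (\<Sum>k\<in>K. (D k)^2) + 24 * A^2 * B * (\<Sum>k\<in>K. sq_dev lam (J k) k)
       + 24 * A^2 * (\<Sum>k\<in>K. sq_dev lam (J k) k)^2"
proof -
  define b where "b k = (\<Sum>j\<in>J k. a j) - d" for k
  define \<beta> where "\<beta> k = (\<Sum>j\<in>J k. a j * of_real (lam j - pi * of_int k))" for k
  define S where "S = (\<Sum>k\<in>K. sq_dev lam (J k) k)"
  define f where "f x = (\<Sum>k\<in>K. (\<Sum>j\<in>J k. cis (2 * lam j * x) * a j) - cis (2 * pi * of_int k * x) * d)" for x
  have "((\<lambda>x. 3 * (cmod (\<Sum>k\<in>K. b k * cis (2 * pi * of_int k * x)))^2
        + 12 * (cmod (\<Sum>k\<in>K. \<beta> k * cis (2 * pi * of_int k * x)))^2 + 12 * A^2 * S^2) has_integral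
      (3 * (2 * (\<Sum>k\<in>K. (cmod (b k))^2)) + 12 * (2 * (\<Sum>k\<in>K. (cmod (\<beta> k))^2)) + 2 * (12 * A^2 * S^2))) {-1..1}"
    using has_integral_const_real[of "12 * A^2 * S^2" "-1" 1]
    by (intro has_integral_add has_integral_mult_right has_integral_norm_sq_trig_poly K) simp_all
  moreover have "(\<lambda>x. (cmod (f x))^2) integrable_on {-1..1}"
    unfolding f_def by (intro integrable_continuous_interval continuous_intros)
  moreover have "(cmod (f x))^2 \<le> 3 * (cmod (\<Sum>k\<in>K. b k * cis (2 * pi * of_int k * x)))^2
        + 12 * (cmod (\<Sum>k\<in>K. \<beta> k * cis (2 * pi * of_int k * x)))^2 + 12 * A^2 * S^2"
    if "x \<in> {-1..1}" for x
    unfolding f_def b_def \<beta>_def S_def using that a by (intro power2_norm_cluster_sum_le) auto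
  ultimately have "integral {-1..1} (\<lambda>x. (cmod (f x))^2)
      \<le> 6 * (\<Sum>k\<in>K. (cmod (b k))^2) + 24 * (\<Sum>k\<in>K. (cmod (\<beta> k))^2) + 24 * A^2 * S^2"
    by (intro has_integral_le[OF integrable_integral]) (simp_all add: mult.assoc)
  also have "\<dots> \<le> 6 * (\<Sum>k\<in>K. (D k)^2) + 24 * (\<Sum>k\<in>K. A^2 * B * sq_dev lam (J k) k) + 24 * A^2 * S^2"
  proof -
    have "(cmod (b k))^2 \<le> (D k)^2" if "k \<in> K" for k
      using defect[OF that] unfolding b_def by (intro power_mono) auto
    moreover have "(cmod (\<beta> k))^2 \<le> A^2 * B * sq_dev lam (J k) k" if "k \<in> K" for k
      unfolding \<beta>_def using a[OF that] card[OF that] by (rule norm_first_moment_sq_le)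
    ultimately show ?thesis by (intro add_mono sum_mono mult_left_mono) auto
  qed
  finally show ?thesis by (simp add: f_def S_def sum_distrib_left mult_ac)
qed

section \<open>Matrices\<close>

lemma norm_matrix_vector_mult_le: "norm ((A::complex^'n^'m) *v v) \<le> norm A * norm v"
proof -
  have row: "cmod ((A *v v) $ i) \<le> norm (A $ i) * norm v" for i
  proof -
    have "cmod ((A *v v) $ i) \<le> (\<Sum>j\<in>UNIV. cmod (A $ i $ j) * cmod (v $ j))"
      using norm_sum[of "\<lambda>j. A $ i $ j * v $ j" UNIV] by (simp add: matrix_vector_mult_def norm_mult)
    also have "\<dots> \<le> sqrt ((\<Sum>j\<in>UNIV. (cmod (A $ i $ j))^2) * (\<Sum>j\<in>UNIV. (cmod (v $ j))^2))"
      by (rule real_le_rsqrt, rule Cauchy_Schwarz_ineq_sum)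
    finally show ?thesis by (simp add: norm_vec_def L2_set_def real_sqrt_mult)
  qed
  have "(norm (A *v v))^2 = (\<Sum>i\<in>UNIV. (cmod ((A *v v) $ i))^2)"
    by (simp add: norm_vec_def L2_set_def sum_nonneg)
  also have "\<dots> \<le> (\<Sum>i\<in>UNIV. (norm (A $ i))^2 * (norm v)^2)"
    using row by (intro sum_mono) (simp add: power_mono power_mult_distrib[symmetric])
  also have "\<dots> = (norm A * norm v)^2"
    by (simp add: norm_vec_def L2_set_def sum_nonneg sum_distrib_right power_mult_distrib)
  finally show ?thesis by (rule power2_le_imp_le) simp
qed

lemma opnorm_le_norm: "opnorm (A::complex^'r^'r) \<le> norm A"
  unfolding opnorm_def by (rule onorm_le) (simp add: norm_matrix_vector_mult_le)

lemma norm_entry_le_opnorm: "cmod (A $ i $ l) \<le> opnorm (A::complex^'r^'r)"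
proof -
  have unit: "norm (axis l (1::complex) :: complex^'r) = 1"
  proof -
    have "(\<Sum>m\<in>UNIV. (cmod (axis l (1::complex) $ m))^2) = (\<Sum>m\<in>UNIV. if m = l then 1 else 0)"
      by (intro sum.cong) (auto simp: axis_def)
    then show ?thesis by (simp add: norm_vec_def L2_set_def)
  qed
  have "cmod (A $ i $ l) = cmod ((A *v axis l 1) $ i)"
    by (simp add: matrix_vector_mult_def axis_def if_distrib cong: if_cong)
  also have "\<dots> \<le> norm (A *v axis l 1)" by (rule Finite_Cartesian_Product.norm_nth_le)
  also have "\<dots> \<le> opnorm A * norm (axis l (1::complex))"
    unfolding opnorm_def by (rule onorm[OF matrix_vector_mul_bounded_linear])
  finally show ?thesis by (simp add: unit)
qed

lemma power2_norm_matrix: "(norm (M::complex^'n^'m))^2 = (\<Sum>i\<in>UNIV. \<Sum>l\<in>UNIV. (cmod (M $ i $ l))^2)"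
  by (simp add: norm_vec_def L2_set_def sum_nonneg)

lemma quadratic_form_axis: "(\<Sum>m\<in>UNIV. cnj (axis i c $ m) * Y m) = cnj c * (Y i :: complex)"
proof -
  have "(\<Sum>m\<in>UNIV. cnj (axis i c $ m) * Y m) = (\<Sum>m\<in>UNIV. if m = i then cnj c * Y m else 0)"
    by (intro sum.cong) (auto simp: axis_def)
  then show ?thesis by simp
qed

lemma matrix_vector_mult_axis: "((A::complex^'n^'m) *v axis i c) $ m = A $ m $ i * c"
  by (simp add: matrix_vector_mult_def axis_def if_distrib cong: if_cong)

lemma psd_diagonal:
  assumes "psd (A::complex^'r^'r)"
  shows "Im (A $ i $ i) = 0" and "0 \<le> Re (A $ i $ i)"
proof -
  have "adj A $ i $ i = A $ i $ i" using assms by (simp add: psd_def)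
  then show "Im (A $ i $ i) = 0" by (simp add: adj_def complex_eq_iff)
  have "0 \<le> Re (\<Sum>m\<in>UNIV. cnj (axis i 1 $ m) * (A *v axis i 1) $ m)"
    using assms by (simp add: psd_def)
  then show "0 \<le> Re (A $ i $ i)" by (simp add: quadratic_form_axis matrix_vector_mult_axis)
qed

text \<open>The quadratic form at $z e_i + e_l$ with $|z| = 1$ chosen so that $\bar z A_{il} = -|A_{il}|$.\<close>
lemma psd_entry_le_diagonal:
  assumes "psd (A::complex^'r^'r)"
  shows "2 * cmod (A $ i $ l) \<le> Re (A $ i $ i) + Re (A $ l $ l)"
proof (cases "i = l \<or> A $ i $ l = 0")
  case True
  then show ?thesis using psd_diagonal[OF assms, of i] psd_diagonal[OF assms, of l]
    by (auto simp: cmod_def)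
next
  case False
  define w where "w = A $ i $ l"
  define c where "c = cmod w"
  define z where "z = - (w / of_real c)"
  have c: "c > 0" using False by (simp add: c_def w_def)
  have norm_w: "cnj w * w = of_real (c^2)"
    unfolding c_def by (subst complex_norm_square) (simp add: mult.commute)
  have zw: "cnj z * w = - of_real c" and zz: "cnj z * z = 1"
    using c by (simp_all add: z_def norm_w power2_eq_square)
  have "adj A $ l $ i = A $ l $ i" using assms by (simp add: psd_def)
  then have Ali: "A $ l $ i = cnj w" by (simp add: adj_def w_def)
  define v where "v = axis i z + axis l (1::complex)"
  have "(\<Sum>m\<in>UNIV. cnj (v $ m) * (A *v v) $ m) = cnj z * (A *v v) $ i + (A *v v) $ l"
    by (simp add: v_def distrib_right sum.distrib quadratic_form_axis)
  also have "\<dots> = A $ i $ i * (cnj z * z) + cnj z * w + cnj (cnj z * w) + A $ l $ l"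
    by (simp add: v_def matrix_vector_right_distrib matrix_vector_mult_axis Ali w_def algebra_simps)
  also have "\<dots> = A $ i $ i - 2 * of_real c + A $ l $ l" by (simp add: zz zw)
  finally have "0 \<le> Re (A $ i $ i - 2 * of_real c + A $ l $ l)"
    using assms by (metis psd_def)
  then show ?thesis by (simp add: c_def w_def)
qed

lemma adj_sum: "adj (\<Sum>k\<in>S. f k) = (\<Sum>k\<in>S. adj (f k))"
  by (simp add: adj_def vec_eq_iff cnj_sum)

lemma adj_diff: "adj (A - B) = adj A - adj B"
  by (simp add: adj_def vec_eq_iff)

lemma adj_smat: "adj (smat c A) = smat (cnj c) (adj A)"
  by (simp add: adj_def smat_def vec_eq_iff)

lemma adj_mat_1: "adj (mat 1 :: complex^'r^'r) = mat 1"
  by (simp add: adj_def mat_def vec_eq_iff)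

lemma adj_adj: "adj (adj A) = A"
  by (simp add: adj_def vec_eq_iff)

lemma bounded_linear_adj: "bounded_linear (adj :: complex^'r^'r \<Rightarrow> complex^'r^'r)"
  by (rule linear_conv_bounded_linear[THEN iffD1], rule linearI) (simp_all add: adj_def vec_eq_iff)

lemma partialH_adj:
  assumes "\<And>j. adj (alpha j) = alpha j"
  shows "adj (partialH lam alpha n x) = partialH lam alpha n (- x)"
  unfolding partialH_def Let_def
  by (simp add: adj_diff adj_sum adj_smat adj_mat_1 assms cis_cnj)

section \<open>Clusters\<close>

definition Delta_index :: "real \<Rightarrow> int" where
  "Delta_index x = \<lceil>x / pi - 1/2\<rceil>"

lemma mem_Delta_iff: "x \<in> Delta k \<longleftrightarrow> Delta_index x = k"
proof -
  have "x \<in> Delta k \<longleftrightarrow> of_int k - 1 < x / pi - 1/2 \<and> x / pi - 1/2 \<le> of_int k"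
    using pi_gt_zero by (simp add: Delta_def field_simps)
  then show ?thesis unfolding Delta_index_def by (simp add: ceiling_eq_iff)
qed

lemma mem_window_iff:
  "x \<in> {- pi * (real n - 1/2) <.. pi * (real n + 1/2)} \<longleftrightarrow> Delta_index x \<in> {1 - int n..int n}"
proof -
  have "x \<in> {- pi * (real n - 1/2) <.. pi * (real n + 1/2)} \<longleftrightarrow>
      - real n < x / pi - 1/2 \<and> x / pi - 1/2 \<le> real n"
    using pi_gt_zero by (simp add: field_simps)
  also have "\<dots> \<longleftrightarrow> - int n < Delta_index x \<and> Delta_index x \<le> int n"
    unfolding Delta_index_def by (simp add: less_ceiling_iff ceiling_le_iff)
  finally show ?thesis by auto
qed

lemma Delta_index_pi: "Delta_index (pi * of_int k) = k"
  unfolding Delta_index_def by (simp add: ceiling_eq_iff)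

definition cluster_term :: "(int \<Rightarrow> real) \<Rightarrow> (int \<Rightarrow> complex^'r^'r) \<Rightarrow> int \<Rightarrow> real \<Rightarrow> complex^'r^'r" where
  "cluster_term lam alpha k x =
     (\<Sum>j\<in>idx_in lam (Delta k). smat (cis (2 * lam j * x)) (alpha j)) - smat (cis (2 * pi * of_int k * x)) (mat 1)"

lemma cluster_term_entry:
  "cluster_term lam alpha k x $ i $ l =
     (\<Sum>j\<in>idx_in lam (Delta k). cis (2 * lam j * x) * alpha j $ i $ l) - cis (2 * pi * of_int k * x) * mat 1 $ i $ l"
  by (simp add: cluster_term_def smat_def)

text \<open>The window $(-\pi(n-\frac12),\pi(n+\frac12)]$ is the disjoint union of $\Delta_k$, $1-n \le k \le n$.\<close>
lemma partialH_eq_sum_cluster_term: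
  assumes fin: "\<And>k. finite (idx_in lam (Delta k))"
  shows "partialH lam alpha n x = (\<Sum>k\<in>{1 - int n..int n}. cluster_term lam alpha k x)"
proof -
  define W where "W = {- pi * (real n - 1/2) <.. pi * (real n + 1/2)}"
  have idx: "idx_in lam W = (\<Union>k\<in>{1 - int n..int n}. idx_in lam (Delta k))"
    unfolding W_def idx_in_def mem_window_iff mem_Delta_iff by auto
  have centres: "{k::int. pi * of_int k \<in> W} = {1 - int n..int n}"
    unfolding W_def mem_window_iff Delta_index_pi by auto
  have "(\<Sum>j\<in>idx_in lam W. smat (cis (2 * lam j * x)) (alpha j)) =
      (\<Sum>k\<in>{1 - int n..int n}. \<Sum>j\<in>idx_in lam (Delta k). smat (cis (2 * lam j * x)) (alpha j))"
    unfolding idx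
    by (rule sum.UNION_disjoint) (auto simp: fin[unfolded idx_in_def mem_Delta_iff] idx_in_def mem_Delta_iff)
  then show ?thesis
    unfolding partialH_def Let_def W_def[symmetric] centres cluster_term_def by (simp add: sum_subtractf)
qed

lemma partialH_diff_eq:
  assumes "\<And>k. finite (idx_in lam (Delta k))" and "n \<le> m"
  shows "partialH lam alpha m x - partialH lam alpha n x =
     (\<Sum>k\<in>{1 - int m..int m} - {1 - int n..int n}. cluster_term lam alpha k x)"
proof -
  have "{1 - int n..int n} \<subseteq> {1 - int m..int m}" using assms(2) by auto
  then show ?thesis unfolding partialH_eq_sum_cluster_term[OF assms(1)] by (simp add: sum_diff)
qed

lemma continuous_on_partialH:
  assumes "\<And>k. finite (idx_in lam (Delta k))"
  shows "continuous_on S (partialH lam alpha n)"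
  unfolding partialH_eq_sum_cluster_term[OF assms, abs_def] cluster_term_def smat_def
  by (intro continuous_intros)

lemma borel_measurable_partialH:
  assumes "\<And>k. finite (idx_in lam (Delta k))"
  shows "partialH lam alpha n \<in> borel_measurable lborel"
  using borel_measurable_continuous_onI[OF continuous_on_partialH[OF assms]] by simp

lemma sum_le_infsum_nonneg:
  fixes f :: "'a \<Rightarrow> real"
  assumes "\<And>k. 0 \<le> f k" and "f summable_on UNIV" and "finite F"
  shows "sum f F \<le> infsum f UNIV"
  using infsum_mono_neutral[of f F f UNIV] assms by simp

lemma tendsto_sum_window_infsum:
  fixes f :: "int \<Rightarrow> real"
  assumes "f summable_on UNIV"
  shows "(\<lambda>n. sum f {1 - int n..int n}) \<longlonglongrightarrow> infsum f UNIV"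
proof -
  have "filterlim (\<lambda>n::nat. {1 - int n..int n}) (finite_subsets_at_top UNIV) sequentially"
    unfolding filterlim_finite_subsets_at_top
  proof (intro allI impI)
    fix X :: "int set" assume "finite X \<and> X \<subseteq> UNIV"
    define M where "M = nat (Max (insert 0 (abs ` X)))"
    have M: "\<bar>x\<bar> \<le> int M" if "x \<in> X" for x
    proof -
      have "\<bar>x\<bar> \<le> Max (insert 0 (abs ` X))" using \<open>finite X \<and> X \<subseteq> UNIV\<close> that by (intro Max_ge) auto
      then show ?thesis unfolding M_def by linarith
    qed
    show "\<forall>\<^sub>F n in sequentially. finite {1 - int n..int n} \<and> X \<subseteq> {1 - int n..int n} \<and> {1 - int n..int n} \<subseteq> UNIV"
      using M by (intro eventually_sequentiallyI[of "Suc M"]) fastforce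
  qed
  with has_sum_infsum[OF assms] show ?thesis
    unfolding has_sum_def by (rule filterlim_compose)
qed

lemma psd_entry_le_defect:
  fixes alpha :: "int \<Rightarrow> complex^'r^'r"
  assumes psd: "\<And>j. j \<in> J \<Longrightarrow> psd (alpha j)" and j: "j \<in> J" and J: "finite J"
    and defect: "opnorm (mat 1 - (\<Sum>j\<in>J. alpha j)) \<le> R"
  shows "cmod (alpha j $ i $ l) \<le> 1 + R"
proof -
  have diag: "Re (alpha j $ m $ m) \<le> 1 + R" for m
  proof -
    have "Re (alpha j $ m $ m) \<le> (\<Sum>j'\<in>J. Re (alpha j' $ m $ m))"
      by (rule member_le_sum) (auto simp: j J psd psd_diagonal(2))
    also have "\<dots> = 1 - Re ((mat 1 - (\<Sum>j\<in>J. alpha j)) $ m $ m)" by (simp add: Re_sum mat_def)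
    also have "\<dots> \<le> 1 + R"
      using abs_Re_le_cmod[of "(mat 1 - (\<Sum>j\<in>J. alpha j)) $ m $ m"]
        norm_entry_le_opnorm[of "mat 1 - (\<Sum>j\<in>J. alpha j)" m m] defect by linarith
    finally show ?thesis .
  qed
  moreover have "2 * cmod (alpha j $ i $ l) \<le> Re (alpha j $ i $ i) + Re (alpha j $ l $ l)"
    by (rule psd_entry_le_diagonal[OF psd[OF j]])
  ultimately show ?thesis by (smt (verit))
qed

lemma psd_cluster_entry_le:
  fixes alpha :: "int \<Rightarrow> complex^'r^'r"
  assumes psd: "\<And>j. psd (alpha j)" and fin: "\<And>k. finite (idx_in lam (Delta k))"
    and D: "(\<lambda>k. (opnorm (mat 1 - (\<Sum>j\<in>idx_in lam (Delta k). alpha j)))^2) summable_on UNIV"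
    and j: "j \<in> idx_in lam (Delta k)"
  shows "cmod (alpha j $ i $ l)
    \<le> 1 + sqrt (infsum (\<lambda>k. (opnorm (mat 1 - (\<Sum>j\<in>idx_in lam (Delta k). alpha j)))^2) UNIV)"
proof (rule psd_entry_le_defect[OF psd j fin[of k]], rule real_le_rsqrt)
  show "(opnorm (mat 1 - (\<Sum>j\<in>idx_in lam (Delta k). alpha j)))^2
      \<le> infsum (\<lambda>k. (opnorm (mat 1 - (\<Sum>j\<in>idx_in lam (Delta k). alpha j)))^2) UNIV"
    using sum_le_infsum_nonneg[OF _ D, of "{k}"] by simp
qed

lemma integral_norm_sq_partialH_diff_le:
  fixes lam :: "int \<Rightarrow> real" and alpha :: "int \<Rightarrow> complex^'r^'r"
  assumes fin: "\<And>k. finite (idx_in lam (Delta k))"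
    and card: "\<And>k. card (idx_in lam (Delta k)) \<le> B"
    and entry: "\<And>k j i l. j \<in> idx_in lam (Delta k) \<Longrightarrow> cmod (alpha j $ i $ l) \<le> A"
    and "n \<le> m"
  defines "K \<equiv> {1 - int m..int m} - {1 - int n..int n}"
  shows "integral {-1..1} (\<lambda>x. (norm (partialH lam alpha m x - partialH lam alpha n x))^2) \<le>
    real CARD('r)^2 * (6 * (\<Sum>k\<in>K. (opnorm (mat 1 - (\<Sum>j\<in>idx_in lam (Delta k). alpha j)))^2)
      + 24 * A^2 * B * (\<Sum>k\<in>K. sq_dev lam (idx_in lam (Delta k)) k)
      + 24 * A^2 * (\<Sum>k\<in>K. sq_dev lam (idx_in lam (Delta k)) k)^2)"
    (is "_ \<le> _ * ?bound")
proof -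
  define g where "g i l x = (cmod (\<Sum>k\<in>K. (\<Sum>j\<in>idx_in lam (Delta k). cis (2 * lam j * x) * alpha j $ i $ l)
      - cis (2 * pi * of_int k * x) * mat 1 $ i $ l))^2" for i l x
  have entrywise: "(norm (partialH lam alpha m x - partialH lam alpha n x))^2 = (\<Sum>i\<in>UNIV. \<Sum>l\<in>UNIV. g i l x)" for x
    unfolding partialH_diff_eq[OF fin \<open>n \<le> m\<close>] power2_norm_matrix g_def K_def
    by (simp add: cluster_term_entry)
  have g_int: "g i l integrable_on {-1..1}" for i l
    unfolding g_def by (intro integrable_continuous_interval continuous_intros)
  have g_le: "integral {-1..1} (g i l) \<le> ?bound" for i l
    unfolding g_def
  proof (rule integral_norm_sq_cluster_sum_le)
    show "cmod ((\<Sum>j\<in>idx_in lam (Delta k). alpha j $ i $ l) - mat 1 $ i $ l)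
        \<le> opnorm (mat 1 - (\<Sum>j\<in>idx_in lam (Delta k). alpha j))" for k
      using norm_entry_le_opnorm[of "mat 1 - (\<Sum>j\<in>idx_in lam (Delta k). alpha j)" i l]
      by (simp add: norm_minus_commute)
  qed (simp_all add: K_def card entry)
  have "integral {-1..1} (\<lambda>x. (norm (partialH lam alpha m x - partialH lam alpha n x))^2)
      = (\<Sum>i\<in>UNIV. \<Sum>l\<in>UNIV. integral {-1..1} (g i l))"
    unfolding entrywise by (simp add: integral_sum g_int integrable_sum)
  also have "\<dots> \<le> (\<Sum>i\<in>(UNIV::'r set). \<Sum>l\<in>(UNIV::'r set). ?bound)"
    by (intro sum_mono g_le)
  also have "\<dots> = real CARD('r)^2 * ?bound" by (simp add: power2_eq_square)
  finally show ?thesis .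
qed

lemma nn_integral_Ioo_le_integral:
  fixes g :: "real \<Rightarrow> real"
  assumes "continuous_on {a..b} g" and "\<And>x. x \<in> {a..b} \<Longrightarrow> 0 \<le> g x"
  shows "(\<integral>\<^sup>+x\<in>{a<..<b}. ennreal (g x) \<partial>lborel) \<le> ennreal (integral {a..b} g)"
proof -
  have "(\<integral>\<^sup>+x\<in>{a<..<b}. ennreal (g x) \<partial>lborel) \<le> (\<integral>\<^sup>+x. ennreal (g x) * indicator {a..b} x \<partial>lborel)"
    by (intro nn_integral_mono) (auto simp: indicator_def)
  also have "\<dots> = ennreal (integral {a..b} g)"
    by (intro nn_integral_has_integral_lebesgue' integrable_integral integrable_continuous_interval assms)
  finally show ?thesis .
qed

lemma sum_window_diff_le_tail:
  fixes f :: "int \<Rightarrow> real"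
  assumes "\<And>k. 0 \<le> f k" and "f summable_on UNIV" and "n \<le> m"
  shows "sum f ({1 - int m..int m} - {1 - int n..int n}) \<le> infsum f UNIV - sum f {1 - int n..int n}"
proof -
  have "{1 - int n..int n} \<subseteq> {1 - int m..int m}" using assms(3) by auto
  then show ?thesis using sum_le_infsum_nonneg[OF assms(1,2), of "{1 - int m..int m}"] by (simp add: sum_diff)
qed

lemma partialH_L2_Cauchy:
  fixes alpha :: "int \<Rightarrow> complex^'r^'r"
  assumes psd: "\<And>j. psd (alpha j)" and A1: "condA1 lam alpha"
  obtains eps where "eps \<longlonglongrightarrow> 0"
    and "\<And>n m. n \<le> m \<Longrightarrow> (\<integral>\<^sup>+x\<in>{-1<..<1}.
           ennreal ((norm (partialH lam alpha m x - partialH lam alpha n x))^2) \<partial>lborel) \<le> ennreal (eps n)"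
proof -
  from A1 obtain B :: nat where fin: "\<And>k. finite (idx_in lam (Delta k))"
    and card: "\<And>k. card (idx_in lam (Delta k)) \<le> B"
    and \<sigma>_sum: "(\<lambda>k. sq_dev lam (idx_in lam (Delta k)) k) summable_on UNIV"
    and D_sum: "(\<lambda>k. (opnorm (mat 1 - (\<Sum>j\<in>idx_in lam (Delta k). alpha j)))^2) summable_on UNIV"
    unfolding condA1_def sq_dev_def by blast
  define D where "D k = (opnorm (mat 1 - (\<Sum>j\<in>idx_in lam (Delta k). alpha j)))^2" for k
  define \<sigma> where "\<sigma> k = sq_dev lam (idx_in lam (Delta k)) k" for k
  define tail where "tail f n = infsum f UNIV - sum f {1 - int n..int n}" for f :: "int \<Rightarrow> real" and n
  define A where "A = 1 + sqrt (infsum D UNIV)"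
  define C where "C = real CARD('r)^2"
  define eps where
    "eps n = C * (6 * tail D n + 24 * A^2 * B * tail \<sigma> n + 24 * A^2 * infsum \<sigma> UNIV * tail \<sigma> n)" for n
  have D: "\<And>k. 0 \<le> D k" "D summable_on UNIV" using D_sum by (simp_all add: D_def[abs_def])
  have \<sigma>: "\<And>k. 0 \<le> \<sigma> k" "\<sigma> summable_on UNIV"
    using \<sigma>_sum by (simp_all add: \<sigma>_def[abs_def] sq_dev_nonneg)
  have entry: "cmod (alpha j $ i $ l) \<le> A" if "j \<in> idx_in lam (Delta k)" for k j i l
    unfolding A_def D_def[abs_def] using psd fin D_sum that by (rule psd_cluster_entry_le)
  have tail_0: "tail f \<longlonglongrightarrow> 0" if "f summable_on UNIV" for f
    using tendsto_diff[OF tendsto_const[of "infsum f UNIV"] tendsto_sum_window_infsum[OF that]]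
    by (simp add: tail_def[abs_def])
  have "eps \<longlonglongrightarrow> C * (6 * 0 + 24 * A^2 * B * 0 + 24 * A^2 * infsum \<sigma> UNIV * 0)"
    unfolding eps_def[abs_def] by (intro tendsto_intros tail_0 D \<sigma>)
  then have "eps \<longlonglongrightarrow> 0" by simp
  moreover have "(\<integral>\<^sup>+x\<in>{-1<..<1}.
      ennreal ((norm (partialH lam alpha m x - partialH lam alpha n x))^2) \<partial>lborel) \<le> ennreal (eps n)"
    if "n \<le> m" for n m
  proof -
    define K where "K = {1 - int m..int m} - {1 - int n..int n}"
    have D_K: "sum D K \<le> tail D n" and \<sigma>_K: "sum \<sigma> K \<le> tail \<sigma> n"
      unfolding K_def tail_def using sum_window_diff_le_tail D \<sigma> that by blast+
    have sq: "(sum \<sigma> K)^2 \<le> infsum \<sigma> UNIV * tail \<sigma> n"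
      unfolding power2_eq_square using sum_le_infsum_nonneg[OF \<sigma>, of K] \<sigma>_K
      by (intro mult_mono) (simp_all add: K_def sum_nonneg infsum_nonneg \<sigma>)
    have "integral {-1..1} (\<lambda>x. (norm (partialH lam alpha m x - partialH lam alpha n x))^2)
        \<le> C * (6 * sum D K + 24 * A^2 * B * sum \<sigma> K + 24 * A^2 * (sum \<sigma> K)^2)"
      unfolding C_def K_def D_def[abs_def] \<sigma>_def[abs_def]
      by (rule integral_norm_sq_partialH_diff_le[OF fin card _ that]) (rule entry)
    also have "\<dots> \<le> eps n"
      unfolding eps_def using D_K \<sigma>_K sq
      by (intro mult_left_mono add_mono) (auto simp: C_def mult.assoc intro!: mult_left_mono)
    finally have "integral {-1..1} (\<lambda>x. (norm (partialH lam alpha m x - partialH lam alpha n x))^2) \<le> eps n" .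
    moreover have "continuous_on {-1..1} (\<lambda>x. (norm (partialH lam alpha m x - partialH lam alpha n x))^2)"
      by (intro continuous_intros continuous_on_partialH fin)
    ultimately show ?thesis by (elim order_trans[OF nn_integral_Ioo_le_integral] ennreal_leI) simp
  qed
  ultimately show ?thesis using that by blast
qed

lemma nn_integral_opnorm_le_norm:
  "(\<integral>\<^sup>+x\<in>A. ennreal ((opnorm (F x))^2) \<partial>M) \<le> (\<integral>\<^sup>+x\<in>A. ennreal ((norm (F x))^2) \<partial>M)"
  using order_trans[OF norm_ge_zero norm_entry_le_opnorm]
  by (intro nn_integral_mono mult_right_mono ennreal_leI power_mono opnorm_le_norm) auto

theorem lemma2p5:
  fixes lam :: "int \<Rightarrow> real" and alpha :: "int \<Rightarrow> complex^'r^'r"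
  assumes "strict_mono lam" and "lam 0 \<le> 0" and "0 < lam 1"
    and "\<And>j. alpha j \<noteq> 0" and "\<And>j. psd (alpha j)"
    and "condA1 lam alpha"
  shows "\<exists>H :: real \<Rightarrow> complex^'r^'r.
           H \<in> borel_measurable lborel \<and>
           (\<integral>\<^sup>+ x \<in> {-1<..<1}. ennreal ((opnorm (H x))^2) \<partial>lborel) < \<infinity> \<and>
           (\<lambda>n. \<integral>\<^sup>+ x \<in> {-1<..<1}. ennreal ((opnorm (partialH lam alpha n x - H x))^2) \<partial>lborel)
              \<longlonglongrightarrow> 0 \<and>
           (AE x in lborel. x \<in> {-1<..<1} \<longrightarrow> adj (H x) = H (- x))"
proof -
  have fin: "\<And>k. finite (idx_in lam (Delta k))" using assms(6) unfolding condA1_def by blast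
  note meas = borel_measurable_partialH[OF fin]
  obtain eps where eps: "eps \<longlonglongrightarrow> 0" and Cauchy: "\<And>n m. n \<le> m \<Longrightarrow> (\<integral>\<^sup>+x\<in>{-1<..<1}.
      ennreal ((norm (partialH lam alpha m x - partialH lam alpha n x))^2) \<partial>lborel) \<le> ennreal (eps n)"
    using partialH_L2_Cauchy[OF assms(5,6)] by blast
  obtain s where finite: "(\<integral>\<^sup>+x\<in>{-1<..<1}.
      ennreal ((norm (cauchy_lim (\<lambda>i. partialH lam alpha (s i) x)))^2) \<partial>lborel) < \<infinity>"
    and limit: "(\<lambda>n. \<integral>\<^sup>+x\<in>{-1<..<1}.
      ennreal ((norm (partialH lam alpha n x - cauchy_lim (\<lambda>i. partialH lam alpha (s i) x)))^2) \<partial>lborel) \<longlonglongrightarrow> 0"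
    by (rule L2_limit_cauchy_lim[OF meas _ _ _ Cauchy eps]) (simp_all add: partialH_eq_sum_cluster_term[OF fin])
  define H where "H x = cauchy_lim (\<lambda>i. partialH lam alpha (s i) x)" for x
  have "adj (H x) = H (- x)" for x
    using assms(5) unfolding H_def psd_def
    by (simp add: cauchy_lim_involution[OF bounded_linear_adj adj_adj, symmetric] partialH_adj)
  moreover have "H \<in> borel_measurable lborel" unfolding H_def using meas by measurable
  moreover have "(\<integral>\<^sup>+x\<in>{-1<..<1}. ennreal ((opnorm (H x))^2) \<partial>lborel) < \<infinity>"
    using finite unfolding H_def by (rule order_le_less_trans[OF nn_integral_opnorm_le_norm])
  moreover have "(\<lambda>n. \<integral>\<^sup>+x\<in>{-1<..<1}. ennreal ((opnorm (partialH lam alpha n x - H x))^2) \<partial>lborel) \<longlonglongrightarrow> 0"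
    using limit unfolding H_def
    by (rule tendsto_sandwich[OF _ _ tendsto_const, rotated 2]) (simp_all add: nn_integral_opnorm_le_norm)
  ultimately show ?thesis by auto
qed

end
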